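(* Let $\epsilon>0$ and let $Q$ be the angle variable described in the context, defined on $\mathbb{R}^2\setminus\{(0,0)\}$ with values in $\mathbb{R}/2\pi\mathbb{Z}$. Then the level set $\{x=0\}$ in the $(x,v)$-plane equals $\{Q=\frac{\pi}{2}\}\cup\{Q=-\frac{\pi}{2}\}\cup\{(x,v)=(0,0)\}$.
   Context: Let $\Phi(x)=\frac{x^2}{2}+\frac{\epsilon x^4}{2}$ and $H(x,v)=\frac{v^2}{2}+\Phi(x)$. For $(x,v)\neq(0,0)$ define the angle $\chi\in\mathbb{R}/2\pi\mathbb{Z}$ by $\chi=\arcsin\big(v/\sqrt{2H}\big)$ if $x>0$ and $\chi=\pi-\arcsin\big(v/\sqrt{2H}\big)$ if $x\leq 0$; then $(x,v)\mapsto(\chi,H)$ is a bijection onto $(\mathbb{R}/2\pi\mathbb{Z})\times(0,\infty)$, and we write $x=x(\chi,H)$. Set $a(\chi,H)=\sqrt{2}\,\frac{1+2\epsilon x^2}{\sqrt{1+\epsilon x^2}}$ with $x=x(\chi,H)$. Define $c(H)>0$ by $c(H)\int_0^{2\pi}\frac{\mathrm{d}\chi}{a(\chi,H)}=2\pi$, and $Q(\chi,H)=c(H)\int_0^{\chi}\frac{\mathrm{d}\chi'}{a(\chi',H)}$ (well defined modulo $2\pi$). *)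

theory Defs
  imports "HOL-Analysis.Analysis"
begin

definition angle_eq :: "real \<Rightarrow> real \<Rightarrow> bool" where
  "angle_eq a b \<longleftrightarrow> (\<exists>k::int. a - b = 2 * pi * of_int k)"

definition Phi :: "real \<Rightarrow> real \<Rightarrow> real" where
  "Phi eps x = x^2 / 2 + eps * x^4 / 2"

definition Ham :: "real \<Rightarrow> real \<Rightarrow> real \<Rightarrow> real" where
  "Ham eps x v = v^2 / 2 + Phi eps x"

text \<open>The angle chi(x,v) (a real representative of the class in R / 2 pi Z).\<close>
definition chi :: "real \<Rightarrow> real \<Rightarrow> real \<Rightarrow> real" where
  "chi eps x v = (if x > 0 then arcsin (v / sqrt (2 * Ham eps x v))
                  else pi - arcsin (v / sqrt (2 * Ham eps x v)))"

definition xcoord :: "real \<Rightarrow> real \<Rightarrow> real \<Rightarrow> real" where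
  "xcoord eps ch h = (THE x. \<exists>v. (x, v) \<noteq> (0, 0) \<and> Ham eps x v = h \<and> angle_eq (chi eps x v) ch)"

definition afun :: "real \<Rightarrow> real \<Rightarrow> real \<Rightarrow> real" where
  "afun eps ch h = (let x = xcoord eps ch h in
      sqrt 2 * (1 + 2 * eps * x^2) / sqrt (1 + eps * x^2))"

definition oint :: "(real \<Rightarrow> real) \<Rightarrow> real \<Rightarrow> real" where
  "oint f t = (if 0 \<le> t then integral {0..t} f else - integral {t..0} f)"

definition cfun :: "real \<Rightarrow> real \<Rightarrow> real" where
  "cfun eps h = (THE c. c > 0 \<and> c * integral {0..2*pi} (\<lambda>ch. 1 / afun eps ch h) = 2 * pi)"

definition Qfun :: "real \<Rightarrow> real \<Rightarrow> real \<Rightarrow> real" where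
  "Qfun eps ch h = cfun eps h * oint (\<lambda>ch'. 1 / afun eps ch' h) ch"

definition Qxv :: "real \<Rightarrow> real \<Rightarrow> real \<Rightarrow> real" where
  "Qxv eps x v = Qfun eps (chi eps x v) (Ham eps x v)"

end

(*
  The coordinate x(chi, H) depends on chi only through cos chi ^ 2, so the density 1 / a(., H)
  is even and pi-periodic. Hence Q(., H) is a strictly increasing odd function with
  Q(chi + pi) = Q(chi) + pi; it fixes pi/2 and 3 pi/2 and maps the range (-pi/2, 3 pi/2] of chi
  into itself. Modulo 2 pi, Q is +-pi/2 exactly when chi is pi/2 or 3 pi/2, i.e. when x = 0.
*)
theory Submission
  imports Defs
begin

lemma angle_eq_iff_sin_cos: "angle_eq a b \<longleftrightarrow> sin a = sin b \<and> cos a = cos b"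
  by (auto simp: angle_eq_def sin_cos_eq_iff algebra_simps)

lemma angle_eq_imp_eq:
  assumes "angle_eq a b" "\<bar>a - b\<bar> < 2 * pi"
  shows "a = b"
proof -
  obtain k :: int where k: "a - b = 2 * pi * k"
    using assms(1) by (auto simp: angle_eq_def)
  then have "\<bar>real_of_int k\<bar> < 1"
    using assms(2) by (simp add: abs_mult)
  then have "k = 0"
    by linarith
  then show ?thesis
    using k by simp
qed

lemma angle_eq_right_angle_iff:
  assumes "- (pi / 2) < y" "y \<le> 3 * pi / 2"
  shows "angle_eq y (pi / 2) \<or> angle_eq y (- pi / 2) \<longleftrightarrow> y = pi / 2 \<or> y = 3 * pi / 2"
proof -
  have "angle_eq y (pi / 2) \<longleftrightarrow> y = pi / 2"
    using assms angle_eq_imp_eq[of y "pi / 2"] by (auto simp: angle_eq_def intro!: exI[of _ 0])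
  moreover have "angle_eq y (- pi / 2) \<longleftrightarrow> angle_eq y (3 * pi / 2)"
    by (auto simp: angle_eq_def algebra_simps intro: exI[of _ "_ + 1"] exI[of _ "_ - 1"])
  moreover have "angle_eq y (3 * pi / 2) \<longleftrightarrow> y = 3 * pi / 2"
    using assms angle_eq_imp_eq[of y "3 * pi / 2"] by (auto simp: angle_eq_def intro!: exI[of _ 0])
  ultimately show ?thesis
    by blast
qed

lemma oint_eq_integral_diff:
  fixes f :: "real \<Rightarrow> real"
  assumes f: "continuous_on UNIV f" and "a \<le> 0" "a \<le> t"
  shows "oint f t = integral {a..t} f - integral {a..0} f"
proof -
  have integrable: "f integrable_on {c..d}" for c d
    using continuous_on_subset[OF f] by (blast intro: integrable_continuous_real)
  show ?thesis
  proof (cases "0 \<le> t")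
    case True
    then have "integral {a..0} f + integral {0..t} f = integral {a..t} f"
      using \<open>a \<le> 0\<close> by (intro Henstock_Kurzweil_Integration.integral_combine integrable) auto
    then show ?thesis using True by (simp add: oint_def)
  next
    case False
    then have "integral {a..t} f + integral {t..0} f = integral {a..0} f"
      using \<open>a \<le> t\<close> by (intro Henstock_Kurzweil_Integration.integral_combine integrable) auto
    then show ?thesis using False by (simp add: oint_def)
  qed
qed

lemma has_real_derivative_oint:
  fixes f :: "real \<Rightarrow> real"
  assumes f: "continuous_on UNIV f"
  shows "(oint f has_real_derivative f t) (at t)"
proof -
  define a where "a = min t 0 - 1"
  have "((\<lambda>x. integral {a..x} f) has_real_derivative f t) (at t within {a..t + 1})"
    by (rule integral_has_real_derivative) (auto simp: a_def intro: continuous_on_subset[OF f])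
  moreover have "at t within {a..t + 1} = at t"
    by (rule at_within_Icc_at) (auto simp: a_def)
  ultimately have "((\<lambda>x. integral {a..x} f - integral {a..0} f) has_real_derivative f t) (at t)"
    by (auto intro!: derivative_eq_intros)
  then show ?thesis
    by (rule has_field_derivative_transform_within_open[where S = "{a<..}"])
       (auto simp: a_def intro!: oint_eq_integral_diff[OF f, symmetric])
qed

lemma has_real_derivative_oint_comp:
  fixes f :: "real \<Rightarrow> real"
  assumes "continuous_on UNIV f" and "(g has_real_derivative g') (at t)"
  shows "((\<lambda>t. oint f (g t)) has_real_derivative f (g t) * g') (at t)"
  using DERIV_chain2[OF has_real_derivative_oint[OF assms(1)] assms(2)] .

lemma oint_0 [simp]: "oint f 0 = 0"
  by (simp add: oint_def)

lemma oint_minus: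
  fixes f :: "real \<Rightarrow> real"
  assumes f: "continuous_on UNIV f" and even: "\<And>t. f (- t) = f t"
  shows "oint f (- t) = - oint f t"
proof -
  have "((\<lambda>t. oint f (- t) + oint f t) has_real_derivative 0) (at s)" for s
  proof -
    have "((\<lambda>t. oint f (- t)) has_real_derivative f (- s) * - 1) (at s)"
      using has_real_derivative_oint_comp[OF f DERIV_minus[OF DERIV_ident]] by simp
    from DERIV_add[OF this has_real_derivative_oint[OF f]] show ?thesis by (simp add: even)
  qed
  from DERIV_isconst_all[OF allI[OF this], of t 0] show ?thesis by simp
qed

lemma oint_add_period:
  fixes f :: "real \<Rightarrow> real"
  assumes f: "continuous_on UNIV f" and periodic: "\<And>t. f (t + p) = f t"
  shows "oint f (t + p) = oint f t + oint f p"
proof -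
  have "((\<lambda>t. oint f (t + p) - oint f t) has_real_derivative 0) (at s)" for s
  proof -
    have "((\<lambda>t. oint f (t + p)) has_real_derivative f (s + p) * 1) (at s)"
      using has_real_derivative_oint_comp[OF f DERIV_add[OF DERIV_ident DERIV_const]] by simp
    from DERIV_diff[OF this has_real_derivative_oint[OF f]] show ?thesis by (simp add: periodic)
  qed
  from DERIV_isconst_all[OF allI[OF this], of t 0] show ?thesis by simp
qed

lemma strict_mono_oint:
  fixes f :: "real \<Rightarrow> real"
  assumes "continuous_on UNIV f" and "\<And>t. f t > 0"
  shows "strict_mono (oint f)"
proof (rule strict_monoI)
  fix a b :: real
  assume "a < b"
  then show "oint f a < oint f b"
    using has_real_derivative_oint[OF assms(1)] assms(2) by (metis DERIV_pos_imp_increasing)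
qed

lemma Phi_nonneg: "0 \<le> eps \<Longrightarrow> 0 \<le> Phi eps x"
  by (simp add: Phi_def)

lemma Phi_eq_0_iff: "0 \<le> eps \<Longrightarrow> Phi eps x = 0 \<longleftrightarrow> x = 0"
  by (auto simp: Phi_def add_nonneg_eq_0_iff)

lemma Ham_pos: "0 \<le> eps \<Longrightarrow> (x, v) \<noteq> (0, 0) \<Longrightarrow> 0 < Ham eps x v"
  using Phi_nonneg[of eps x] Phi_eq_0_iff[of eps x]
  by (cases "v = 0") (auto simp: Ham_def add_pos_nonneg)

(* x^2 in terms of p = Phi eps x: the nonnegative root y of y + eps y^2 = 2 p *)
definition sq_of_Phi :: "real \<Rightarrow> real \<Rightarrow> real" where
  "sq_of_Phi eps p = (sqrt (1 + 8 * eps * p) - 1) / (2 * eps)"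

lemma sq_of_Phi_nonneg: "0 < eps \<Longrightarrow> 0 \<le> p \<Longrightarrow> 0 \<le> sq_of_Phi eps p"
  by (simp add: sq_of_Phi_def)

lemma sq_of_Phi_Phi:
  assumes "0 < eps"
  shows "sq_of_Phi eps (Phi eps x) = x^2"
proof -
  have "1 + 8 * eps * Phi eps x = (1 + 2 * eps * x^2)^2"
    by (simp add: Phi_def power2_eq_square power4_eq_xxxx algebra_simps)
  then have "sqrt (1 + 8 * eps * Phi eps x) = 1 + 2 * eps * x^2"
    using assms by simp
  then show ?thesis
    using assms by (simp add: sq_of_Phi_def)
qed

lemma Phi_eq_if_sq_eq_sq_of_Phi:
  assumes "0 < eps" "0 \<le> p" and x: "x^2 = sq_of_Phi eps p"
  shows "Phi eps x = p"
proof -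
  have "sqrt (1 + 8 * eps * p) = 1 + 2 * eps * x^2"
    using assms by (simp add: sq_of_Phi_def field_simps)
  moreover have "0 \<le> 1 + 8 * eps * p"
    using assms by simp
  ultimately have "1 + 8 * eps * p = (1 + 2 * eps * x^2)^2"
    by (metis real_sqrt_pow2)
  then have "4 * eps * (2 * p) = 4 * eps * (x^2 + eps * x^4)"
    by (simp add: power2_eq_square power4_eq_xxxx algebra_simps)
  then show ?thesis
    using assms by (simp add: Phi_def)
qed

lemma chi_sine_sq:
  assumes "0 \<le> eps" "(x, v) \<noteq> (0, 0)"
  shows "(v / sqrt (2 * Ham eps x v))^2 = 1 - Phi eps x / Ham eps x v"
  using Ham_pos[OF assms] by (simp add: power_divide field_simps Ham_def)

lemma abs_chi_sine_le:
  assumes "0 \<le> eps" "(x, v) \<noteq> (0, 0)"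
  shows "\<bar>v / sqrt (2 * Ham eps x v)\<bar> \<le> 1"
proof -
  have "0 \<le> Phi eps x / Ham eps x v"
    using Phi_nonneg[OF assms(1)] Ham_pos[OF assms] by simp
  then show ?thesis
    unfolding abs_square_le_1[symmetric] chi_sine_sq[OF assms] by simp
qed

lemma abs_chi_sine_less_1_iff:
  assumes "0 \<le> eps" "(x, v) \<noteq> (0, 0)"
  shows "\<bar>v / sqrt (2 * Ham eps x v)\<bar> < 1 \<longleftrightarrow> x \<noteq> 0"
proof -
  have "0 < Phi eps x / Ham eps x v \<longleftrightarrow> x \<noteq> 0"
    using Phi_nonneg[OF assms(1), of x] Phi_eq_0_iff[OF assms(1), of x] Ham_pos[OF assms]
    by (simp add: less_le)
  then show ?thesis
    unfolding abs_square_less_1[symmetric] chi_sine_sq[OF assms] by simp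
qed

lemma sin_chi:
  assumes "0 \<le> eps" "(x, v) \<noteq> (0, 0)"
  shows "sin (chi eps x v) = v / sqrt (2 * Ham eps x v)"
  using abs_chi_sine_le[OF assms] unfolding chi_def abs_le_iff
  by (simp del: real_sqrt_mult)

lemma cos_chi:
  assumes "0 \<le> eps" "(x, v) \<noteq> (0, 0)"
  shows "cos (chi eps x v) =
    (if 0 < x then sqrt (Phi eps x / Ham eps x v) else - sqrt (Phi eps x / Ham eps x v))"
  using abs_chi_sine_le[OF assms] unfolding chi_def abs_le_iff
  by (simp add: cos_arcsin chi_sine_sq[OF assms] del: real_sqrt_mult)

lemma Phi_eq_Ham_cos_chi_sq:
  assumes "0 \<le> eps" "(x, v) \<noteq> (0, 0)"
  shows "Phi eps x = Ham eps x v * (cos (chi eps x v))^2"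
  using cos_chi[OF assms] Phi_nonneg[OF assms(1), of x] Ham_pos[OF assms] by simp

lemma cos_chi_pos_iff:
  assumes "0 \<le> eps" "(x, v) \<noteq> (0, 0)"
  shows "0 < cos (chi eps x v) \<longleftrightarrow> 0 < x"
proof (cases "0 < x")
  case True
  then have "0 < Phi eps x"
    using Phi_nonneg[OF assms(1), of x] Phi_eq_0_iff[OF assms(1), of x] by simp
  then show ?thesis
    using True cos_chi[OF assms] Ham_pos[OF assms] by simp
next
  case False
  have "0 \<le> Phi eps x / Ham eps x v"
    using Phi_nonneg[OF assms(1), of x] Ham_pos[OF assms] by simp
  then show ?thesis
    using False cos_chi[OF assms] by simp
qed

lemma chi_bounds:
  assumes "0 \<le> eps" "(x, v) \<noteq> (0, 0)"
  shows "- (pi / 2) < chi eps x v" "chi eps x v \<le> 3 * pi / 2"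
proof -
  define s where "s = v / sqrt (2 * Ham eps x v)"
  have "- 1 \<le> s" "s \<le> 1"
    using abs_chi_sine_le[OF assms] unfolding s_def[symmetric] by linarith+
  then have "- (pi / 2) \<le> arcsin s" "arcsin s \<le> pi / 2"
    using arcsin_bounded by blast+
  moreover have "- (pi / 2) < arcsin s" if "0 < x"
  proof -
    have "\<bar>s\<bar> < 1"
      using abs_chi_sine_less_1_iff[OF assms] that unfolding s_def[symmetric] by simp
    then show ?thesis
      using arcsin_lt_bounded[of s] by linarith
  qed
  ultimately show "- (pi / 2) < chi eps x v" "chi eps x v \<le> 3 * pi / 2"
    using pi_gt_zero unfolding chi_def s_def[symmetric] by (auto simp del: pi_gt_zero)
qed

lemma chi_right_angle_iff:
  assumes "0 \<le> eps" "(x, v) \<noteq> (0, 0)"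
  shows "chi eps x v = pi / 2 \<or> chi eps x v = 3 * pi / 2 \<longleftrightarrow> x = 0"
proof -
  define s where "s = v / sqrt (2 * Ham eps x v)"
  have chi_s: "chi eps x v = (if 0 < x then arcsin s else pi - arcsin s)"
    by (simp add: chi_def s_def)
  show ?thesis
  proof (cases "x = 0")
    case True
    then have "\<bar>s\<bar> = 1"
      using abs_chi_sine_le[OF assms] abs_chi_sine_less_1_iff[OF assms]
      unfolding s_def[symmetric] by linarith
    then have "s = 1 \<or> s = - 1"
      by linarith
    then show ?thesis
      unfolding chi_s using True by auto
  next
    case False
    then have "\<bar>s\<bar> < 1"
      using abs_chi_sine_less_1_iff[OF assms] unfolding s_def[symmetric] by simp
    then have "- (pi / 2) < arcsin s" "arcsin s < pi / 2"
      using arcsin_lt_bounded[of s] by linarith+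
    then show ?thesis
      unfolding chi_s using False by auto
  qed
qed

lemma eq_if_power2_eq_and_pos_iff:
  fixes a b :: real
  assumes "a^2 = b^2" and "0 < a \<longleftrightarrow> 0 < b"
  shows "a = b"
  using assms power2_eq_iff[of a b] by auto

lemma polar_x_coordinate:
  assumes "0 < eps" "(x, v) \<noteq> (0, 0)" "Ham eps x v = h" "angle_eq (chi eps x v) t"
  shows "x^2 = sq_of_Phi eps (h * (cos t)^2)" "0 < x \<longleftrightarrow> 0 < cos t"
proof -
  have eps: "0 \<le> eps" using assms(1) by simp
  have cos_t: "cos (chi eps x v) = cos t"
    using assms(4) by (simp add: angle_eq_iff_sin_cos)
  show "x^2 = sq_of_Phi eps (h * (cos t)^2)"
    using Phi_eq_Ham_cos_chi_sq[OF eps assms(2)] sq_of_Phi_Phi[OF assms(1), of x]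
    by (simp add: assms(3) cos_t)
  show "0 < x \<longleftrightarrow> 0 < cos t"
    using cos_chi_pos_iff[OF eps assms(2)] by (simp add: cos_t)
qed

lemma polar_point_exists:
  assumes "0 < eps" "0 < h"
  shows "\<exists>x v. (x, v) \<noteq> (0, 0) \<and> Ham eps x v = h \<and> angle_eq (chi eps x v) t"
proof -
  have eps: "0 \<le> eps" using assms(1) by simp
  define y where "y = sq_of_Phi eps (h * (cos t)^2)"
  define x where "x = (if 0 < cos t then sqrt y else - sqrt y)"
  define v where "v = sqrt (2 * h) * sin t"
  have y_nonneg: "0 \<le> y"
    using sq_of_Phi_nonneg[OF assms(1)] assms(2) by (simp add: y_def)
  then have Phi_x: "Phi eps x = h * (cos t)^2"
    using assms by (intro Phi_eq_if_sq_eq_sq_of_Phi) (auto simp: x_def y_def)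
  have Ham_xv: "Ham eps x v = h"
  proof -
    have "Ham eps x v = h * (sin t)^2 + h * (cos t)^2"
      using assms(2) by (simp add: Ham_def Phi_x v_def power_mult_distrib)
    also have "\<dots> = h"
      by (simp flip: distrib_left)
    finally show ?thesis .
  qed
  have nonzero: "(x, v) \<noteq> (0, 0)"
    using Ham_xv assms(2) by (auto simp: Ham_def Phi_def)
  have "sin (chi eps x v) = sin t"
    unfolding sin_chi[OF eps nonzero] Ham_xv using assms(2) by (simp add: v_def)
  moreover have "cos (chi eps x v) = cos t"
  proof (rule eq_if_power2_eq_and_pos_iff)
    show "(cos (chi eps x v))^2 = (cos t)^2"
      using Phi_eq_Ham_cos_chi_sq[OF eps nonzero] assms(2) by (simp add: Phi_x Ham_xv)
    have "x \<noteq> 0" if "0 < cos t"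
      using that assms(2) Phi_x Phi_eq_0_iff[OF eps, of x] by auto
    then have "0 < x \<longleftrightarrow> 0 < cos t"
      using y_nonneg by (auto simp: x_def)
    then show "0 < cos (chi eps x v) \<longleftrightarrow> 0 < cos t"
      using cos_chi_pos_iff[OF eps nonzero] by simp
  qed
  ultimately show ?thesis
    using nonzero Ham_xv by (auto simp: angle_eq_iff_sin_cos)
qed

lemma xcoord_sq:
  assumes "0 < eps" "0 < h"
  shows "(xcoord eps t h)^2 = sq_of_Phi eps (h * (cos t)^2)"
proof -
  let ?P = "\<lambda>x. \<exists>v. (x, v) \<noteq> (0, 0) \<and> Ham eps x v = h \<and> angle_eq (chi eps x v) t"
  obtain x0 where x0: "?P x0"
    using polar_point_exists[OF assms] by blast
  have unique: "x = x0" if "?P x" for x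
    using that x0 polar_x_coordinate[OF assms(1)] by (metis eq_if_power2_eq_and_pos_iff)
  have "?P (xcoord eps t h)"
    unfolding xcoord_def by (rule theI[of ?P x0, OF x0 unique])
  then show ?thesis
    using polar_x_coordinate[OF assms(1)] by blast
qed

lemma afun_eq:
  assumes "0 < eps" "0 < h"
  shows "afun eps t h =
    (let y = sq_of_Phi eps (h * (cos t)^2) in sqrt 2 * (1 + 2 * eps * y) / sqrt (1 + eps * y))"
  by (simp add: afun_def xcoord_sq[OF assms] Let_def)

lemma afun_pos:
  assumes "0 < eps" "0 < h"
  shows "0 < afun eps t h"
  using sq_of_Phi_nonneg[OF assms(1), of "h * (cos t)^2"] assms
  by (simp add: afun_eq Let_def add_pos_nonneg)

lemma afun_minus: "0 < eps \<Longrightarrow> 0 < h \<Longrightarrow> afun eps (- t) h = afun eps t h"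
  by (simp add: afun_eq)

lemma afun_add_pi: "0 < eps \<Longrightarrow> 0 < h \<Longrightarrow> afun eps (t + pi) h = afun eps t h"
  by (simp add: afun_eq)

lemma continuous_on_sq_of_Phi [continuous_intros]:
  "0 < eps \<Longrightarrow> continuous_on S g \<Longrightarrow> continuous_on S (\<lambda>t. sq_of_Phi eps (g t))"
  unfolding sq_of_Phi_def by (intro continuous_intros) auto

lemma continuous_on_inverse_afun:
  assumes "0 < eps" "0 < h"
  shows "continuous_on UNIV (\<lambda>t. 1 / afun eps t h)"
proof -
  have "0 < 1 + eps * sq_of_Phi eps (h * (cos t)^2)" for t
    using sq_of_Phi_nonneg[OF assms(1), of "h * (cos t)^2"] assms by (simp add: add_pos_nonneg)
  then have "continuous_on UNIV (\<lambda>t. afun eps t h)"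
    unfolding afun_eq[OF assms] Let_def using assms(1)
    by (intro continuous_intros) (auto simp: dual_order.strict_implies_not_eq)
  moreover have "afun eps t h \<noteq> 0" for t
    using afun_pos[OF assms, of t] by simp
  ultimately show ?thesis
    by (intro continuous_intros) auto
qed

lemma strict_mono_oint_inverse_afun:
  assumes "0 < eps" "0 < h"
  shows "strict_mono (oint (\<lambda>t. 1 / afun eps t h))"
  by (rule strict_mono_oint[OF continuous_on_inverse_afun[OF assms]]) (simp add: afun_pos[OF assms])

lemma oint_inverse_afun_pi_pos:
  assumes "0 < eps" "0 < h"
  shows "0 < oint (\<lambda>t. 1 / afun eps t h) pi"
  using strict_mono_less[OF strict_mono_oint_inverse_afun[OF assms], of 0 pi] by simp

lemma oint_inverse_afun_minus:
  assumes "0 < eps" "0 < h"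
  shows "oint (\<lambda>t. 1 / afun eps t h) (- t) = - oint (\<lambda>t. 1 / afun eps t h) t"
  by (rule oint_minus[OF continuous_on_inverse_afun[OF assms]]) (simp add: afun_minus[OF assms])

lemma oint_inverse_afun_add_pi:
  assumes "0 < eps" "0 < h"
  shows "oint (\<lambda>t. 1 / afun eps t h) (t + pi) =
    oint (\<lambda>t. 1 / afun eps t h) t + oint (\<lambda>t. 1 / afun eps t h) pi"
  by (rule oint_add_period[OF continuous_on_inverse_afun[OF assms]])
     (simp add: afun_add_pi[OF assms])

lemma cfun_eq:
  assumes "0 < eps" "0 < h"
  shows "cfun eps h = pi / oint (\<lambda>t. 1 / afun eps t h) pi"
proof -
  let ?f = "\<lambda>t. 1 / afun eps t h"
  have "integral {0..2 * pi} ?f = oint ?f (pi + pi)"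
    by (simp add: oint_def)
  also have "\<dots> = 2 * oint ?f pi"
    unfolding oint_inverse_afun_add_pi[OF assms] by simp
  finally have "integral {0..2 * pi} ?f = 2 * oint ?f pi" .
  then show ?thesis
    unfolding cfun_def using oint_inverse_afun_pi_pos[OF assms]
    by (intro the_equality) (auto simp: field_simps)
qed

lemma Qfun_eq:
  assumes "0 < eps" "0 < h"
  shows "Qfun eps t h = pi * oint (\<lambda>t. 1 / afun eps t h) t / oint (\<lambda>t. 1 / afun eps t h) pi"
  by (simp add: Qfun_def cfun_eq[OF assms])

lemma strict_mono_Qfun:
  assumes "0 < eps" "0 < h"
  shows "strict_mono (\<lambda>t. Qfun eps t h)"
  using strict_mono_oint_inverse_afun[OF assms] oint_inverse_afun_pi_pos[OF assms]
  by (auto simp: strict_mono_def Qfun_eq[OF assms] divide_strict_right_mono)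

lemma Qfun_minus:
  assumes "0 < eps" "0 < h"
  shows "Qfun eps (- t) h = - Qfun eps t h"
  by (simp add: Qfun_eq[OF assms] oint_inverse_afun_minus[OF assms])

lemma Qfun_add_pi:
  assumes "0 < eps" "0 < h"
  shows "Qfun eps (t + pi) h = Qfun eps t h + pi"
  using oint_inverse_afun_pi_pos[OF assms]
  unfolding Qfun_eq[OF assms] oint_inverse_afun_add_pi[OF assms] by (simp add: field_simps)

lemma Qfun_pi_half:
  assumes "0 < eps" "0 < h"
  shows "Qfun eps (pi / 2) h = pi / 2"
  using Qfun_add_pi[OF assms, of "- (pi / 2)"] Qfun_minus[OF assms, of "pi / 2"] by simp

lemma Qxv_right_angle_iff:
  assumes "0 < eps" "(x, v) \<noteq> (0, 0)"
  shows "angle_eq (Qxv eps x v) (pi / 2) \<or> angle_eq (Qxv eps x v) (- pi / 2) \<longleftrightarrow> x = 0"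
proof -
  have eps: "0 \<le> eps" using assms(1) by simp
  define h where "h = Ham eps x v"
  define Q where "Q = (\<lambda>t. Qfun eps t h)"
  have h: "0 < h"
    unfolding h_def using Ham_pos[OF eps assms(2)] .
  have Qxv: "Qxv eps x v = Q (chi eps x v)"
    by (simp add: Qxv_def Q_def h_def)
  have mono: "strict_mono Q"
    unfolding Q_def using strict_mono_Qfun[OF assms(1) h] .
  have Q_pi_half: "Q (- (pi / 2)) = - (pi / 2)" "Q (pi / 2) = pi / 2" "Q (3 * pi / 2) = 3 * pi / 2"
    using Qfun_pi_half[OF assms(1) h] Qfun_minus[OF assms(1) h, of "pi / 2"]
      Qfun_add_pi[OF assms(1) h, of "pi / 2"]
    by (simp_all add: Q_def)
  have "Q (- (pi / 2)) < Q (chi eps x v)" "Q (chi eps x v) \<le> Q (3 * pi / 2)"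
    using chi_bounds[OF eps assms(2)]
    by (simp_all add: strict_mono_less[OF mono] strict_mono_less_eq[OF mono])
  then have "- (pi / 2) < Q (chi eps x v)" "Q (chi eps x v) \<le> 3 * pi / 2"
    by (simp_all add: Q_pi_half)
  then have "angle_eq (Qxv eps x v) (pi / 2) \<or> angle_eq (Qxv eps x v) (- pi / 2) \<longleftrightarrow>
      Q (chi eps x v) = pi / 2 \<or> Q (chi eps x v) = 3 * pi / 2"
    unfolding Qxv by (rule angle_eq_right_angle_iff)
  also have "\<dots> \<longleftrightarrow> chi eps x v = pi / 2 \<or> chi eps x v = 3 * pi / 2"
    using strict_mono_eq[OF mono, of "chi eps x v" "pi / 2"]
      strict_mono_eq[OF mono, of "chi eps x v" "3 * pi / 2"]
    unfolding Q_pi_half by blast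
  also have "\<dots> \<longleftrightarrow> x = 0"
    by (rule chi_right_angle_iff[OF eps assms(2)])
  finally show ?thesis .
qed

theorem lemma5p2:
  fixes eps :: real
  assumes "eps > 0"
  shows "{p :: real \<times> real. fst p = 0} =
     {(x, v). (x, v) \<noteq> (0, 0) \<and> angle_eq (Qxv eps x v) (pi / 2)}
     \<union> {(x, v). (x, v) \<noteq> (0, 0) \<and> angle_eq (Qxv eps x v) (- pi / 2)}
     \<union> {(0, 0)}"
  using Qxv_right_angle_iff[OF assms] by fastforce

end
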